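(* Let $\ell\ge2$. In $CK(2,\ell)$ there is a directed path from a vertex $u$ to a vertex $v$ if and only if the imprint of $v$ contains the same number of $+$ signs and the same number of $-$ signs as the imprint of $u$.
   Context: $CK(2,\ell)$ has as vertices all sequences $a_1\ldots a_\ell\in\{0,1,2\}^\ell$ with $a_i\neq a_{i+1}$ for $1\le i\le\ell-1$ and $a_1\ne a_\ell$, and an arc from $a_1\ldots a_\ell$ to $b_1\ldots b_\ell$ iff both are vertices and $b_i=a_{i+1}$ for $1\le i\le \ell-1$. For distinct $a,b\in\{0,1,2\}$ define $sgn(0,1)=sgn(1,2)=sgn(2,0)=+$ and $sgn(1,0)=sgn(2,1)=sgn(0,2)=-$. The imprint of $v=v_1\ldots v_\ell$ is $im(v)=(sgn(v_1,v_2),\dots,sgn(v_{\ell-1},v_\ell),sgn(v_\ell,v_1))$. *)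

theory Defs
  imports Main
begin

text \<open>Vertices of CK(2,l): sequences a_1 ... a_l over {0,1,2}, represented as lists of
  naturals of length l (index i of the list is a_(i+1)).\<close>
definition CK_vertex :: "nat \<Rightarrow> nat list \<Rightarrow> bool" where
  "CK_vertex l a \<longleftrightarrow> length a = l \<and> set a \<subseteq> {0,1,2}
     \<and> (\<forall>i. i + 1 < l \<longrightarrow> a ! i \<noteq> a ! (i + 1))
     \<and> a ! 0 \<noteq> a ! (l - 1)"

definition CK_arc :: "nat \<Rightarrow> nat list \<Rightarrow> nat list \<Rightarrow> bool" where
  "CK_arc l a b \<longleftrightarrow> CK_vertex l a \<and> CK_vertex l b
     \<and> (\<forall>i. i + 1 < l \<longrightarrow> b ! i = a ! (i + 1))"

datatype sign = Plus | Minus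

definition sgn3 :: "nat \<Rightarrow> nat \<Rightarrow> sign" where
  "sgn3 a b = (if (a, b) \<in> {(0,1),(1,2),(2,0)} then Plus else Minus)"

definition imprint :: "nat list \<Rightarrow> sign list" where
  "imprint v = map (\<lambda>i. sgn3 (v ! i) (v ! ((i + 1) mod length v))) [0..<length v]"

definition count_sign :: "sign \<Rightarrow> sign list \<Rightarrow> nat" where
  "count_sign s xs = length (filter (\<lambda>x. x = s) xs)"

end

theory Submission
  imports Defs "HOL-Library.Multiset"
begin

text \<open>
  An arc overwrites entry 0 of a vertex and then rotates it by one.  A vertex may change
  in a single entry j only if the two cyclic neighbours of j agree, and the new entry is then the
  third symbol (a flip); a flip swaps the imprint entries at the predecessor of j and at j,
  while a rotation rotates the imprint.  Hence the multiset of the imprint is invariant.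
  Conversely, rotations and flips are reachable and every arc can be undone, so reachability is
  symmetric.  Flipping adjacent entries (-,+) of the imprint away from position 0 sorts it into
  +\<dots>+-\<dots>- without touching the first entry, and any symbol can be brought to the front.  A
  vertex is determined by its first entry and its imprint, so two vertices with the same sign
  counts reach a common vertex.
\<close>

section \<open>Cyclic description of the vertices\<close>

lemma Suc_mod_inj:
  fixes i k l :: nat
  assumes "i < l" "k < l" "Suc i mod l = Suc k mod l"
  shows "i = k"
  using assms by (auto simp: mod_Suc split: if_splits)

lemma Suc_mod_neq:
  fixes j l :: nat
  assumes "2 \<le> l" "j < l"
  shows "Suc j mod l \<noteq> j"
  using assms by (auto simp: mod_Suc)

lemma cyclic_pred_exists:
  fixes j l :: nat
  assumes "j < l"
  shows "\<exists>k<l. Suc k mod l = j"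
proof (cases j)
  case 0
  then show ?thesis using assms by (intro exI[of _ "l - 1"]) simp
next
  case (Suc k)
  then show ?thesis using assms by (intro exI[of _ k]) simp
qed

lemma CK_vertex_two_le: "CK_vertex l a \<Longrightarrow> 2 \<le> l"
  by (cases "l - 1 = 0") (auto simp: CK_vertex_def)

lemma CK_vertex_iff_cyclic:
  assumes "0 < l"
  shows "CK_vertex l a \<longleftrightarrow>
    length a = l \<and> set a \<subseteq> {0,1,2} \<and> (\<forall>i<l. a ! i \<noteq> a ! (Suc i mod l))"
proof -
  have "(\<forall>i<l. a ! i \<noteq> a ! (Suc i mod l)) \<longleftrightarrow>
        (\<forall>i. i + 1 < l \<longrightarrow> a ! i \<noteq> a ! (i + 1)) \<and> a ! 0 \<noteq> a ! (l - 1)"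
  proof safe
    fix i assume "\<forall>i<l. a ! i \<noteq> a ! (Suc i mod l)" "i + 1 < l" "a ! i = a ! (i + 1)"
    then show False by (metis Suc_eq_plus1 Suc_lessD mod_less)
  next
    assume "\<forall>i<l. a ! i \<noteq> a ! (Suc i mod l)" "a ! 0 = a ! (l - 1)"
    then show False using assms by (metis Suc_pred' diff_less less_numeral_extra(1) mod_self)
  next
    fix i assume "\<forall>i. i + 1 < l \<longrightarrow> a ! i \<noteq> a ! (i + 1)" "a ! 0 \<noteq> a ! (l - 1)"
      "i < l" "a ! i = a ! (Suc i mod l)"
    then show False by (cases "Suc i = l") auto
  qed
  then show ?thesis using assms by (auto simp: CK_vertex_def)
qed

lemma CK_vertex_length: "CK_vertex l a \<Longrightarrow> length a = l"
  by (simp add: CK_vertex_def)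

lemma CK_vertex_nth_in: "CK_vertex l a \<Longrightarrow> i < l \<Longrightarrow> a ! i \<in> {0,1,2}"
  unfolding CK_vertex_def using nth_mem by blast

lemma CK_vertex_nth_neq: "CK_vertex l a \<Longrightarrow> i < l \<Longrightarrow> a ! i \<noteq> a ! (Suc i mod l)"
  using CK_vertex_iff_cyclic CK_vertex_two_le by fastforce

lemma third_value:
  fixes x y :: nat
  assumes "x \<in> {0,1,2}" "y \<in> {0,1,2}" "x \<noteq> y"
  shows "3 - x - y \<in> {0,1,2}" "3 - x - y \<noteq> x"
    "sgn3 (3 - x - y) x = sgn3 x y" "sgn3 x (3 - x - y) = sgn3 y x"
  using assms by (auto simp: sgn3_def)

lemma sgn3_left_cancel:
  assumes "x \<in> {0,1,2}" "y \<in> {0,1,2}" "z \<in> {0,1,2}" "x \<noteq> y" "x \<noteq> z"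
    and "sgn3 x y = sgn3 x z"
  shows "y = z"
  using assms by (auto simp: sgn3_def)

lemma sgn3_neq_imp_eq:
  assumes "x \<in> {0,1,2}" "y \<in> {0,1,2}" "z \<in> {0,1,2}" "x \<noteq> y" "y \<noteq> z"
    and "sgn3 x y \<noteq> sgn3 y z"
  shows "x = z"
  using assms by (auto simp: sgn3_def)

lemma length_imprint [simp]: "length (imprint a) = length a"
  by (simp add: imprint_def)

lemma nth_imprint: "i < length a \<Longrightarrow> imprint a ! i = sgn3 (a ! i) (a ! (Suc i mod length a))"
  by (simp add: imprint_def)

section \<open>Rotations and flips\<close>

lemma mset_rotate [simp]: "mset (rotate n xs) = mset xs"
proof -
  have "mset (rotate1 ys) = mset ys" for ys :: "'a list" by (cases ys) auto
  then show ?thesis by (induction n) (simp_all add: rotate_Suc)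
qed

lemma mod_add_Suc_mod: "(k + Suc i mod l) mod l = Suc ((k + i) mod l) mod (l::nat)"
  by (metis add_Suc_right mod_Suc_eq mod_add_right_eq)

lemma CK_vertex_rotate:
  assumes "CK_vertex l a"
  shows "CK_vertex l (rotate k a)"
proof -
  have l: "0 < l" "length a = l" using assms CK_vertex_two_le CK_vertex_length by fastforce+
  have "rotate k a ! i \<noteq> rotate k a ! (Suc i mod l)" if "i < l" for i
    using CK_vertex_nth_neq[OF assms, of "(k + i) mod l"] that l
    by (simp add: nth_rotate mod_add_Suc_mod)
  then show ?thesis using assms l by (simp add: CK_vertex_iff_cyclic)
qed

lemma imprint_rotate: "imprint (rotate k a) = rotate k (imprint a)"
proof (cases "a = []")
  case False
  show ?thesis
  proof (rule nth_equalityI)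
    fix i assume "i < length (imprint (rotate k a))"
    then show "imprint (rotate k a) ! i = rotate k (imprint a) ! i"
      using False by (simp add: nth_rotate nth_imprint mod_add_Suc_mod)
  qed simp
qed (simp add: imprint_def)

lemma rotate_list_update:
  assumes "j < length xs"
  shows "rotate j (xs[j := x]) = (rotate j xs)[0 := x]"
proof (rule nth_equalityI)
  fix i assume "i < length (rotate j (xs[j := x]))"
  then have "i < length xs" by simp
  moreover have "(j + i) mod length xs = j \<longleftrightarrow> i = 0" if "i < length xs"
    using that assms by (cases "j + i < length xs") (auto simp: mod_if)
  ultimately show "rotate j (xs[j := x]) ! i = (rotate j xs)[0 := x] ! i"
    using assms by (cases "i = 0") (auto simp: nth_rotate nth_list_update)
qed simp

lemma CK_vertex_update:
  assumes V: "CK_vertex l a" and k: "k < l" "Suc k mod l = j"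
    and x: "x \<in> {0,1,2}" "x \<noteq> a ! k" "x \<noteq> a ! (Suc j mod l)"
  shows "CK_vertex l (a[j := x])"
proof -
  have l: "2 \<le> l" "length a = l" using V CK_vertex_two_le CK_vertex_length by blast+
  have j: "j < l" using k(2) l(1) mod_less_divisor[of l "Suc k"] by linarith
  have kj: "k \<noteq> j" and succ_j: "Suc j mod l \<noteq> j" using Suc_mod_neq l j k(2) by blast+
  have "a[j := x] ! i \<noteq> a[j := x] ! (Suc i mod l)" if i: "i < l" for i
  proof -
    consider "i = j" | "i = k" | "i \<noteq> j" "i \<noteq> k" by blast
    then show ?thesis
    proof cases
      case 1
      then show ?thesis using x(3) succ_j j l by simp
    next
      case 2
      then show ?thesis using x(2) k(2) kj j l by simp
    next
      case 3
      then have "Suc i mod l \<noteq> j" using Suc_mod_inj i k by metis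
      then show ?thesis using 3 CK_vertex_nth_neq[OF V i] l by simp
    qed
  qed
  moreover have "set (a[j := x]) \<subseteq> {0,1,2}"
    using V x(1) set_update_subset_insert unfolding CK_vertex_def by fastforce
  ultimately show ?thesis using l by (simp add: CK_vertex_iff_cyclic)
qed

lemma CK_vertex_update_cases:
  assumes V: "CK_vertex l a" "CK_vertex l (a[j := x])" and k: "k < l" "Suc k mod l = j"
  shows "x = a ! j \<or> a ! k = a ! (Suc j mod l) \<and> x = 3 - a ! k - a ! j"
proof -
  have l: "2 \<le> l" "length a = l" using V CK_vertex_two_le CK_vertex_length by blast+
  have j: "j < l" using k(2) l(1) mod_less_divisor[of l "Suc k"] by linarith
  have kj: "k \<noteq> j" and succ_j: "Suc j mod l \<noteq> j" using Suc_mod_neq l j k(2) by blast+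
  have "x \<noteq> a ! k" using CK_vertex_nth_neq[OF V(2) k(1)] k(2) kj j l by simp
  moreover have "x \<noteq> a ! (Suc j mod l)" using CK_vertex_nth_neq[OF V(2) j] succ_j j l by simp
  moreover have "x \<in> {0,1,2}" using CK_vertex_nth_in[OF V(2) j] j l by simp
  moreover have "a ! k \<noteq> a ! j" using CK_vertex_nth_neq[OF V(1) k(1)] k(2) by simp
  moreover have "a ! j \<noteq> a ! (Suc j mod l)" using CK_vertex_nth_neq[OF V(1) j] .
  moreover have "a ! k \<in> {0,1,2}" "a ! j \<in> {0,1,2}" "a ! (Suc j mod l) \<in> {0,1,2}"
    using CK_vertex_nth_in[OF V(1)] k(1) j l by simp_all
  ultimately show ?thesis by auto
qed

lemma imprint_flip:
  assumes V: "CK_vertex l a" and k: "k < l" "Suc k mod l = j"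
    and eq: "a ! k = a ! (Suc j mod l)"
  shows "imprint (a[j := 3 - a ! k - a ! j]) = (imprint a)[k := imprint a ! j, j := imprint a ! k]"
proof (rule nth_equalityI)
  have l: "2 \<le> l" "length a = l" using V CK_vertex_two_le CK_vertex_length by blast+
  have j: "j < l" using k(2) l(1) mod_less_divisor[of l "Suc k"] by linarith
  have "a ! k \<noteq> a ! j" using CK_vertex_nth_neq[OF V k(1)] k by simp
  note third = third_value[OF CK_vertex_nth_in[OF V k(1)] CK_vertex_nth_in[OF V j] this]
  have succ_j: "Suc j mod l \<noteq> j" using Suc_mod_neq l j by blast
  have imp_j: "imprint a ! j = sgn3 (a ! j) (a ! k)" using nth_imprint[of j a] l j eq by simp
  have imp_k: "imprint a ! k = sgn3 (a ! k) (a ! j)" using nth_imprint[of k a] l k by simp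
  fix i assume "i < length (imprint (a[j := 3 - a ! k - a ! j]))"
  then have i: "i < l" using l by simp
  consider "i = j" | "i = k" | "i \<noteq> j" "i \<noteq> k" by blast
  then show "imprint (a[j := 3 - a ! k - a ! j]) ! i =
      (imprint a)[k := imprint a ! j, j := imprint a ! k] ! i"
  proof cases
    case 1
    then show ?thesis
      using nth_imprint[of j "a[j := 3 - a ! k - a ! j]"] l j succ_j eq[symmetric] imp_k third
      by simp
  next
    case 2
    then have "k \<noteq> j" using succ_j k by auto
    then show ?thesis
      using 2 nth_imprint[of k "a[j := 3 - a ! k - a ! j]"] l j k imp_j third by simp
  next
    case 3
    then have "Suc i mod l \<noteq> j" using Suc_mod_inj i k by metis
    then show ?thesis
      using 3 nth_imprint[of i "a[j := 3 - a ! k - a ! j]"] nth_imprint[of i a] l i by simp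
  qed
qed simp

section \<open>Reachability\<close>

lemma CK_arc_iff:
  "CK_arc l a b \<longleftrightarrow>
    CK_vertex l a \<and> (\<exists>x. CK_vertex l (a[0 := x]) \<and> b = rotate 1 (a[0 := x]))"
proof
  assume A: "CK_arc l a b"
  then have V: "CK_vertex l a" "CK_vertex l b" by (simp_all add: CK_arc_def)
  have l: "2 \<le> l" "length a = l" "length b = l"
    using V CK_vertex_two_le CK_vertex_length by blast+
  have b: "b = rotate 1 (a[0 := b ! (l - 1)])"
  proof (rule nth_equalityI)
    fix i assume "i < length b"
    then consider "i + 1 < l" | "i = l - 1" using l by linarith
    then show "b ! i = rotate 1 (a[0 := b ! (l - 1)]) ! i"
      by cases (use A l in \<open>auto simp: CK_arc_def nth_rotate1\<close>)
  qed (simp add: l)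
  then have "rotate (l - 1) b = a[0 := b ! (l - 1)]"
    using l by (metis le_add_diff_inverse2 le_trans length_list_update one_le_numeral
        rotate_id rotate_rotate mod_self)
  then have "CK_vertex l (a[0 := b ! (l - 1)])" using CK_vertex_rotate[OF V(2)] by metis
  with V b show "CK_vertex l a \<and> (\<exists>x. CK_vertex l (a[0 := x]) \<and> b = rotate 1 (a[0 := x]))"
    by blast
next
  assume "CK_vertex l a \<and> (\<exists>x. CK_vertex l (a[0 := x]) \<and> b = rotate 1 (a[0 := x]))"
  then obtain x where V: "CK_vertex l a" "CK_vertex l (a[0 := x])"
    and b: "b = rotate 1 (a[0 := x])" by blast
  moreover have "CK_vertex l b" using CK_vertex_rotate[OF V(2)] b by blast
  ultimately show "CK_arc l a b"
    unfolding CK_arc_def by (auto simp: CK_vertex_length nth_rotate1)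
qed

lemma rtranclp_CK_arc_rotate:
  assumes "CK_vertex l a"
  shows "(CK_arc l)\<^sup>*\<^sup>* (rotate m a) (rotate n a)"
proof -
  have rotate_reach: "(CK_arc l)\<^sup>*\<^sup>* b (rotate k b)" if "CK_vertex l b" for b k
  proof (induction k)
    case (Suc k)
    have "CK_arc l (rotate k b) (rotate 1 (rotate k b))"
      using CK_arc_iff CK_vertex_rotate[OF that] by (metis list_update_id)
    with Suc show ?case by (simp add: rotate_rotate)
  qed simp
  have l: "length a = l" "0 < l" using assms CK_vertex_length CK_vertex_two_le by fastforce+
  have "m mod l < l" using l by simp
  then have "n + l - m mod l + m = n + l + m div l * l"
    using div_mult_mod_eq[of m l] by linarith
  then have "(n + l - m mod l + m) mod l = n mod l" by simp
  then have "rotate n a = rotate (n + l - m mod l) (rotate m a)"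
    using l by (metis rotate_conv_mod rotate_rotate)
  then show ?thesis using rotate_reach CK_vertex_rotate assms by metis
qed

lemma rtranclp_CK_arc_update:
  assumes V: "CK_vertex l a" "CK_vertex l (a[j := x])" and j: "j < l"
  shows "(CK_arc l)\<^sup>*\<^sup>* a (a[j := x])"
proof -
  have "(rotate j a)[0 := x] = rotate j (a[j := x])"
    using rotate_list_update j CK_vertex_length[OF V(1)] by metis
  then have "CK_arc l (rotate j a) (rotate 1 (rotate j (a[j := x])))"
    using CK_arc_iff CK_vertex_rotate V by metis
  then have "(CK_arc l)\<^sup>*\<^sup>* (rotate j a) (rotate (Suc j) (a[j := x]))"
    by (simp add: rotate_rotate)
  moreover have "(CK_arc l)\<^sup>*\<^sup>* a (rotate j a)"
    using rtranclp_CK_arc_rotate[OF V(1), of 0 j] by simp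
  moreover have "(CK_arc l)\<^sup>*\<^sup>* (rotate (Suc j) (a[j := x])) (a[j := x])"
    using rtranclp_CK_arc_rotate[OF V(2), of "Suc j" 0] by simp
  ultimately show ?thesis by (meson rtranclp_trans)
qed

lemma CK_arc_converse:
  assumes "CK_arc l a b"
  shows "(CK_arc l)\<^sup>*\<^sup>* b a"
proof -
  obtain x where V: "CK_vertex l a" "CK_vertex l (a[0 := x])" and b: "b = rotate 1 (a[0 := x])"
    using assms CK_arc_iff by blast
  have "(CK_arc l)\<^sup>*\<^sup>* b (a[0 := x])"
    using rtranclp_CK_arc_rotate[OF V(2), of 1 0] b by simp
  moreover have "(CK_arc l)\<^sup>*\<^sup>* (a[0 := x]) a"
    using rtranclp_CK_arc_update[OF V(2), of 0 "a ! 0"] V CK_vertex_two_le[OF V(1)] by simp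
  ultimately show ?thesis by (rule rtranclp_trans)
qed

lemma rtranclp_CK_arc_sym: "(CK_arc l)\<^sup>*\<^sup>* a b \<Longrightarrow> (CK_arc l)\<^sup>*\<^sup>* b a"
  by (induction rule: rtranclp_induct) (blast intro: rtranclp_trans CK_arc_converse)+

lemma mset_imprint_update:
  assumes V: "CK_vertex l a" "CK_vertex l (a[j := x])" and j: "j < l"
  shows "mset (imprint (a[j := x])) = mset (imprint a)"
proof -
  obtain k where k: "k < l" "Suc k mod l = j" using cyclic_pred_exists j by blast
  from CK_vertex_update_cases[OF V k] show ?thesis
  proof
    assume "a ! k = a ! (Suc j mod l) \<and> x = 3 - a ! k - a ! j"
    then have "imprint (a[j := x]) = (imprint a)[k := imprint a ! j, j := imprint a ! k]"
      using imprint_flip[OF V(1) k] by blast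
    then show ?thesis
      using mset_swap[of j "imprint a" k] j k(1) CK_vertex_length[OF V(1)] by simp
  qed simp
qed

lemma mset_imprint_CK_arc:
  assumes "CK_arc l a b"
  shows "mset (imprint b) = mset (imprint a)"
proof -
  obtain x where V: "CK_vertex l a" "CK_vertex l (a[0 := x])" and b: "b = rotate 1 (a[0 := x])"
    using assms CK_arc_iff by blast
  have "0 < l" using CK_vertex_two_le[OF V(1)] by simp
  with b show ?thesis using mset_imprint_update[OF V] by (metis imprint_rotate mset_rotate)
qed

lemma mset_imprint_rtranclp_CK_arc:
  "(CK_arc l)\<^sup>*\<^sup>* a b \<Longrightarrow> mset (imprint b) = mset (imprint a)"
  by (induction rule: rtranclp_induct) (simp_all add: mset_imprint_CK_arc)

section \<open>Sorting the imprint\<close>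

lemma count_sign_eq_count_mset: "count_sign s xs = count (mset xs) s"
  by (induction xs) (auto simp: count_sign_def)

fun minus_plus_inversions :: "sign list \<Rightarrow> nat" where
  "minus_plus_inversions [] = 0"
| "minus_plus_inversions (Plus # xs) = minus_plus_inversions xs"
| "minus_plus_inversions (Minus # xs) = count_sign Plus xs + minus_plus_inversions xs"

lemma minus_plus_inversions_swap:
  "minus_plus_inversions (xs @ Minus # Plus # ys) =
     Suc (minus_plus_inversions (xs @ Plus # Minus # ys))"
proof (induction xs)
  case (Cons x xs)
  then show ?case by (cases x) (simp_all add: count_sign_def)
qed (simp add: count_sign_def)

definition sign_sort :: "sign list \<Rightarrow> sign list" where
  "sign_sort xs = replicate (count_sign Plus xs) Plus @ replicate (count_sign Minus xs) Minus"

lemma sign_sort_mset_cong: "mset xs = mset ys \<Longrightarrow> sign_sort xs = sign_sort ys"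
  by (simp add: sign_sort_def count_sign_eq_count_mset)

lemma sign_sort_id:
  assumes "\<nexists>xs ys. d = xs @ Minus # Plus # ys"
  shows "sign_sort d = d"
  using assms
proof (induction d)
  case (Cons x d)
  have "\<nexists>xs ys. d = xs @ Minus # Plus # ys"
  proof
    assume "\<exists>xs ys. d = xs @ Minus # Plus # ys"
    then obtain xs ys where "d = xs @ Minus # Plus # ys" by blast
    then have "x # d = (x # xs) @ Minus # Plus # ys" by simp
    then show False using Cons.prems by blast
  qed
  note IH = Cons.IH[OF this]
  show ?case
  proof (cases x)
    case Plus
    then show ?thesis using IH by (simp add: sign_sort_def count_sign_eq_count_mset count_mset)
  next
    case Minus
    have "count_sign Plus d = 0"
    proof (rule ccontr)
      assume "count_sign Plus d \<noteq> 0"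
      then obtain p where "count_sign Plus d = Suc p" using not0_implies_Suc by blast
      then have "x # d = [] @ Minus # Plus # replicate p Plus @ replicate (count_sign Minus d) Minus"
        using IH Minus by (simp add: sign_sort_def)
      then show False using Cons.prems by blast
    qed
    then show ?thesis using IH Minus by (simp add: sign_sort_def count_sign_eq_count_mset count_mset)
  qed
qed (simp add: sign_sort_def count_sign_def)

lemma CK_vertex_reaches_sign_sort:
  assumes "CK_vertex l a"
  shows "\<exists>c. (CK_arc l)\<^sup>*\<^sup>* a c \<and> CK_vertex l c \<and> c ! 0 = a ! 0 \<and>
    imprint c = sign_sort (imprint a)"
  using assms
proof (induction "minus_plus_inversions (imprint a)" arbitrary: a rule: less_induct)
  case less
  note V = less.prems
  show ?case
  proof (cases "\<exists>xs ys. imprint a = xs @ Minus # Plus # ys")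
    case False
    then show ?thesis using sign_sort_id V by (metis rtranclp.rtrancl_refl)
  next
    case True
    then obtain xs ys where imp: "imprint a = xs @ Minus # Plus # ys" by blast
    define k where "k = length xs"
    have l: "length a = l" using CK_vertex_length[OF V] .
    have "length a = k + Suc (Suc (length ys))"
      using arg_cong[OF imp, of length] k_def by simp
    then have k: "Suc k < l" "Suc k mod l = Suc k" using l by simp_all
    have in012: "a ! k \<in> {0,1,2}" "a ! Suc k \<in> {0,1,2}" "a ! (Suc (Suc k) mod l) \<in> {0,1,2}"
      using CK_vertex_nth_in[OF V] k by simp_all
    have ne: "a ! k \<noteq> a ! Suc k" "a ! Suc k \<noteq> a ! (Suc (Suc k) mod l)"
      using CK_vertex_nth_neq[OF V, of k] CK_vertex_nth_neq[OF V, of "Suc k"] k by simp_all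
    have "sgn3 (a ! k) (a ! Suc k) \<noteq> sgn3 (a ! Suc k) (a ! (Suc (Suc k) mod l))"
      using nth_imprint[of k a] nth_imprint[of "Suc k" a] imp k l k_def by (simp add: nth_append)
    then have eq: "a ! k = a ! (Suc (Suc k) mod l)" using sgn3_neq_imp_eq[OF in012 ne] by blast
    define a' where "a' = a[Suc k := 3 - a ! k - a ! Suc k]"
    note third = third_value[OF in012(1,2) ne(1)]
    have kl: "k < l" using k by simp
    have V': "CK_vertex l a'"
      using CK_vertex_update[OF V kl k(2)] third eq a'_def by simp
    have "imprint a ! k = Minus" "imprint a ! Suc k = Plus" using imp k_def by (simp_all add: nth_append)
    then have "imprint a' = (imprint a)[k := Plus, Suc k := Minus]"
      using imprint_flip[OF V kl k(2) eq] a'_def by simp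
    also have "\<dots> = xs @ Plus # Minus # ys" using imp k_def by (simp add: list_update_append)
    finally have imp': "imprint a' = xs @ Plus # Minus # ys" .
    obtain c where c: "(CK_arc l)\<^sup>*\<^sup>* a' c" "CK_vertex l c" "c ! 0 = a' ! 0"
        "imprint c = sign_sort (imprint a')"
      using less.hyps[OF _ V'] imp imp' minus_plus_inversions_swap by auto
    have "(CK_arc l)\<^sup>*\<^sup>* a a'" using rtranclp_CK_arc_update[OF V] V' k a'_def by simp
    moreover have "sign_sort (imprint a') = sign_sort (imprint a)"
      using imp imp' sign_sort_mset_cong by simp
    ultimately show ?thesis using c a'_def by (auto intro: rtranclp_trans)
  qed
qed

lemma CK_vertex_reaches_first:
  assumes V: "CK_vertex l a" and y: "y \<in> {0,1,2}"
  shows "\<exists>a'. (CK_arc l)\<^sup>*\<^sup>* a a' \<and> CK_vertex l a' \<and> a' ! 0 = y"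
proof -
  have l: "2 \<le> l" "length a = l" using V CK_vertex_two_le CK_vertex_length by blast+
  show ?thesis
  proof (cases "y \<in> set a")
    case True
    then obtain k where "k < l" "a ! k = y" using l by (auto simp: in_set_conv_nth)
    then have "rotate k a ! 0 = y" using l by (simp add: nth_rotate)
    then show ?thesis
      using rtranclp_CK_arc_rotate[OF V, of 0 k] CK_vertex_rotate[OF V] by auto
  next
    case False
    then have "y \<noteq> a ! (l - 1)" "y \<noteq> a ! (Suc 0 mod l)" using l by auto
    then have V': "CK_vertex l (a[0 := y])"
      using CK_vertex_update[OF V, of "l - 1" 0 y] y l by simp
    then show ?thesis
      using rtranclp_CK_arc_update[OF V V'] l by (intro exI[of _ "a[0 := y]"]) simp
  qed
qed

lemma CK_vertex_eqI:
  assumes V: "CK_vertex l c" "CK_vertex l d"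
    and first: "c ! 0 = d ! 0" and imp: "imprint c = imprint d"
  shows "c = d"
proof -
  have l: "length c = l" "length d = l" using V CK_vertex_length by blast+
  have "c ! i = d ! i" if "i < l" for i
    using that
  proof (induction i)
    case (Suc i)
    then have i: "i < l" "Suc i mod l = Suc i" by simp_all
    have "sgn3 (c ! i) (c ! Suc i) = sgn3 (c ! i) (d ! Suc i)"
      using imp nth_imprint[of i c] nth_imprint[of i d] Suc.IH l i by simp
    then show ?case
      using sgn3_left_cancel CK_vertex_nth_in[OF V(1)] CK_vertex_nth_in[OF V(2)]
        CK_vertex_nth_neq[OF V(1) i(1)] CK_vertex_nth_neq[OF V(2) i(1)] Suc i Suc.IH
      by (metis)
  qed (use first in simp)
  with l show ?thesis by (simp add: nth_equalityI)
qed

lemma CK_vertex_reaches_canonical: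
  assumes V: "CK_vertex l a" and y: "y \<in> {0,1,2}"
  obtains c where "(CK_arc l)\<^sup>*\<^sup>* a c" "CK_vertex l c" "c ! 0 = y"
    "imprint c = sign_sort (imprint a)"
proof -
  obtain a' where a': "(CK_arc l)\<^sup>*\<^sup>* a a'" "CK_vertex l a'" "a' ! 0 = y"
    using CK_vertex_reaches_first[OF V y] by blast
  obtain c where c: "(CK_arc l)\<^sup>*\<^sup>* a' c" "CK_vertex l c" "c ! 0 = a' ! 0"
      "imprint c = sign_sort (imprint a')"
    using CK_vertex_reaches_sign_sort[OF a'(2)] by blast
  have "sign_sort (imprint a') = sign_sort (imprint a)"
    using sign_sort_mset_cong mset_imprint_rtranclp_CK_arc[OF a'(1)] by blast
  with a' c show thesis using that rtranclp_trans by metis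
qed

theorem lemma5:
  fixes l :: nat and u v :: "nat list"
  assumes "l \<ge> 2" and "CK_vertex l u" and "CK_vertex l v"
  shows "(CK_arc l)\<^sup>*\<^sup>* u v \<longleftrightarrow>
           (count_sign Plus (imprint v) = count_sign Plus (imprint u)
            \<and> count_sign Minus (imprint v) = count_sign Minus (imprint u))"
proof
  assume "(CK_arc l)\<^sup>*\<^sup>* u v"
  then have "mset (imprint v) = mset (imprint u)" by (rule mset_imprint_rtranclp_CK_arc)
  then show "count_sign Plus (imprint v) = count_sign Plus (imprint u)
      \<and> count_sign Minus (imprint v) = count_sign Minus (imprint u)"
    by (simp add: count_sign_eq_count_mset)
next
  assume "count_sign Plus (imprint v) = count_sign Plus (imprint u)
      \<and> count_sign Minus (imprint v) = count_sign Minus (imprint u)"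
  then have same_sort: "sign_sort (imprint u) = sign_sort (imprint v)"
    by (simp add: sign_sort_def)
  have y: "v ! 0 \<in> {0,1,2}" using CK_vertex_nth_in[OF assms(3), of 0] assms(1) by simp
  obtain c where c: "(CK_arc l)\<^sup>*\<^sup>* u c" "CK_vertex l c" "c ! 0 = v ! 0"
      "imprint c = sign_sort (imprint u)"
    using CK_vertex_reaches_canonical[OF assms(2) y] .
  obtain d where d: "(CK_arc l)\<^sup>*\<^sup>* v d" "CK_vertex l d" "d ! 0 = v ! 0"
      "imprint d = sign_sort (imprint v)"
    using CK_vertex_reaches_canonical[OF assms(3) y] .
  have "c = d" using CK_vertex_eqI[OF c(2) d(2)] c(3,4) d(3,4) same_sort by simp
  then show "(CK_arc l)\<^sup>*\<^sup>* u v"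
    using c(1) rtranclp_CK_arc_sym[OF d(1)] by (meson rtranclp_trans)
qed

end
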